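(* There is a function $C_2(t,\epsilon)$ such that the following holds for every positive integer $t$ and every $\epsilon\in(0,1)$: let $G$ be a bipartite graph which is induced $S_{t,t}$-free. For every edge $ab$ of $G$ and all sets $A\subseteq N(a)$, $B\subseteq N(b)$ with $|B|\geq C_2(t,\epsilon)$, we have $|S_A^B(\epsilon)|\leq C_2(t,\epsilon)$.
   Context: For positive integers $a,b$, the biclaw $S_{a,b}$ is the graph with vertex set $\{x,x_1,\dots,x_a,y,y_1,\dots,y_b\}$ and edges $xy$, $xy_1,\dots,xy_b$, $yx_1,\dots,yx_a$. Induced $S_{t,t}$-free means no induced subgraph isomorphic to $S_{t,t}$. $N(v)$ denotes the neighbourhood of $v$. For vertex sets $X,Y$ and $\epsilon\in(0,1)$, $S_X^Y(\epsilon)=\{x\in X : |N(x)\cap Y|\leq (1-\epsilon)|Y|\}$. *)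

theory Defs
  imports Complex_Main
begin

definition simple_graph :: "'a set \<Rightarrow> ('a \<Rightarrow> 'a \<Rightarrow> bool) \<Rightarrow> bool" where
  "simple_graph V E \<longleftrightarrow> finite V \<and> (\<forall>u v. E u v \<longrightarrow> E v u)
     \<and> (\<forall>v. \<not> E v v) \<and> (\<forall>u v. E u v \<longrightarrow> u \<in> V \<and> v \<in> V)"

definition bipartite :: "'a set \<Rightarrow> ('a \<Rightarrow> 'a \<Rightarrow> bool) \<Rightarrow> bool" where
  "bipartite V E \<longleftrightarrow> (\<exists>X Y. X \<union> Y = V \<and> X \<inter> Y = {}
     \<and> (\<forall>u\<in>X. \<forall>v\<in>X. \<not> E u v) \<and> (\<forall>u\<in>Y. \<forall>v\<in>Y. \<not> E u v))"

definition nbhd :: "'a set \<Rightarrow> ('a \<Rightarrow> 'a \<Rightarrow> bool) \<Rightarrow> 'a \<Rightarrow> 'a set" where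
  "nbhd V E v = {u \<in> V. E v u}"

text \<open>G contains an induced copy of the biclaw S_{a,b}: distinct vertices
  x, x_1..x_a (xs 0..xs (a-1)), y, y_1..y_b (ys 0..ys (b-1)) whose only edges are
  xy, x y_j and y x_i.\<close>
definition has_induced_biclaw :: "'a set \<Rightarrow> ('a \<Rightarrow> 'a \<Rightarrow> bool) \<Rightarrow> nat \<Rightarrow> nat \<Rightarrow> bool" where
  "has_induced_biclaw V E a b \<longleftrightarrow> (\<exists>x y (xs::nat \<Rightarrow> 'a) (ys::nat \<Rightarrow> 'a).
     x \<in> V \<and> y \<in> V \<and> xs ` {..<a} \<subseteq> V \<and> ys ` {..<b} \<subseteq> V
     \<and> inj_on xs {..<a} \<and> inj_on ys {..<b}
     \<and> x \<noteq> y \<and> x \<notin> xs ` {..<a} \<and> x \<notin> ys ` {..<b}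
     \<and> y \<notin> xs ` {..<a} \<and> y \<notin> ys ` {..<b}
     \<and> xs ` {..<a} \<inter> ys ` {..<b} = {}
     \<and> E x y
     \<and> (\<forall>j<b. E x (ys j)) \<and> (\<forall>i<a. E y (xs i))
     \<and> (\<forall>i<a. \<not> E x (xs i)) \<and> (\<forall>j<b. \<not> E y (ys j))
     \<and> (\<forall>i<a. \<forall>i'<a. \<not> E (xs i) (xs i'))
     \<and> (\<forall>j<b. \<forall>j'<b. \<not> E (ys j) (ys j'))
     \<and> (\<forall>i<a. \<forall>j<b. \<not> E (xs i) (ys j)))"

definition induced_biclaw_free :: "'a set \<Rightarrow> ('a \<Rightarrow> 'a \<Rightarrow> bool) \<Rightarrow> nat \<Rightarrow> nat \<Rightarrow> bool" where
  "induced_biclaw_free V E a b \<longleftrightarrow> \<not> has_induced_biclaw V E a b"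

definition sparse_set :: "'a set \<Rightarrow> ('a \<Rightarrow> 'a \<Rightarrow> bool) \<Rightarrow> 'a set \<Rightarrow> 'a set \<Rightarrow> real \<Rightarrow> 'a set" where
  "sparse_set V E X Y eps =
     {x \<in> X. real (card (nbhd V E x \<inter> Y)) \<le> (1 - eps) * real (card Y)}"

end

theory Submission imports Defs begin

text \<open>Every vertex of \<open>S = S_A^B(\<epsilon>)\<close> misses at least \<open>\<epsilon>|B|\<close> vertices of \<open>B\<close>.
  Choose \<open>t\<close> vertices of \<open>B\<close> one at a time, each time one missed by as many of the
  surviving vertices of \<open>S\<close> as possible: by averaging, at least \<open>|S|(\<epsilon>/2)^t\<close> vertices
  of \<open>S\<close> miss all chosen ones. So if \<open>|S| > t(2/\<epsilon>)^t\<close>, there are \<open>t\<close> vertices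
  \<open>U \<subseteq> A\<close> with no edge to \<open>t\<close> vertices \<open>T \<subseteq> B\<close>. As \<open>G\<close> is bipartite, hence
  triangle-free, \<open>a\<close>, \<open>b\<close>, \<open>U\<close> and \<open>T\<close> then induce \<open>S_{t,t}\<close>.\<close>

lemma sum_card_filter_swap:
  assumes "finite S" "finite B"
  shows "(\<Sum>x\<in>S. card {y\<in>B. R x y}) = (\<Sum>y\<in>B. card {x\<in>S. R x y})"
proof -
  have "(\<Sum>x\<in>S. card {y\<in>B. R x y}) = (\<Sum>x\<in>S. \<Sum>y\<in>B. if R x y then 1 else 0)"
    using assms(2) by (simp add: sum.If_cases Int_def)
  also have "\<dots> = (\<Sum>y\<in>B. \<Sum>x\<in>S. if R x y then 1 else 0)"
    by (rule sum.swap)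
  also have "\<dots> = (\<Sum>y\<in>B. card {x\<in>S. R x y})"
    using assms(1) by (simp add: sum.If_cases Int_def)
  finally show ?thesis .
qed

lemma exists_popular_element:
  fixes d :: real
  assumes "finite S" "finite B" "B \<noteq> {}" "\<forall>x\<in>S. d \<le> card {y\<in>B. R x y}"
  shows "\<exists>y\<in>B. d * card S \<le> real (card {x\<in>S. R x y}) * card B"
proof (rule ccontr)
  assume "\<not> ?thesis"
  then have below: "\<forall>y\<in>B. real (card {x\<in>S. R x y}) * card B < d * card S"
    by (auto simp: not_le)
  have "d * card S = (\<Sum>x\<in>S. d)" by simp
  also have "\<dots> \<le> (\<Sum>x\<in>S. real (card {y\<in>B. R x y}))"
    using assms(4) by (intro sum_mono) auto
  also have "\<dots> = (\<Sum>y\<in>B. real (card {x\<in>S. R x y}))"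
    unfolding of_nat_sum[symmetric] sum_card_filter_swap[OF assms(1,2)] ..
  finally have "d * card S * card B \<le> (\<Sum>y\<in>B. real (card {x\<in>S. R x y})) * card B"
    by (rule mult_right_mono) simp
  also have "\<dots> = (\<Sum>y\<in>B. real (card {x\<in>S. R x y}) * card B)"
    by (rule sum_distrib_right)
  also have "\<dots> < (\<Sum>y\<in>B. d * card S)"
    using below assms(2,3) by (intro sum_strict_mono) auto
  also have "\<dots> = d * card S * card B"
    by (simp add: mult.commute)
  finally show False by simp
qed

lemma greedy_product_in_relation:
  fixes d :: real
  assumes "finite S" "finite B" "\<forall>x\<in>S. d \<le> card {y\<in>B. R x y}"
    and "real k \<le> d" "k \<le> card B"
  shows "\<exists>T S'. T \<subseteq> B \<and> card T = k \<and> S' \<subseteq> S \<and> (\<forall>x\<in>S'. \<forall>y\<in>T. R x y)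
           \<and> card S * (d - k) ^ k \<le> real (card S') * real (card B) ^ k"
  using assms(4,5)
proof (induction k)
  case 0
  show ?case by (intro exI[of _ "{}"] exI[of _ S]) simp
next
  case (Suc k)
  then obtain T S' where T: "T \<subseteq> B" "card T = k" "S' \<subseteq> S" "\<forall>x\<in>S'. \<forall>y\<in>T. R x y"
    and bound: "card S * (d - k) ^ k \<le> real (card S') * real (card B) ^ k"
    by fastforce
  have "finite T" "finite S'"
    using T assms(1,2) finite_subset by blast+
  have rest: "\<forall>x\<in>S'. d - k \<le> card {y\<in>B - T. R x y}"
  proof
    fix x assume "x \<in> S'"
    have "{y\<in>B. R x y} \<subseteq> {y\<in>B - T. R x y} \<union> T" by auto
    then have "card {y\<in>B. R x y} \<le> card ({y\<in>B - T. R x y} \<union> T)"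
      using assms(2) \<open>finite T\<close> by (intro card_mono) auto
    also have "\<dots> \<le> card {y\<in>B - T. R x y} + card T"
      by (rule card_Un_le)
    finally have "card {y\<in>B. R x y} \<le> card {y\<in>B - T. R x y} + card T" .
    moreover have "d \<le> card {y\<in>B. R x y}" using assms(3) T(3) \<open>x \<in> S'\<close> by auto
    ultimately show "d - k \<le> card {y\<in>B - T. R x y}" using T(2) by linarith
  qed
  have card_rest: "card (B - T) = card B - k"
    using T \<open>finite T\<close> by (simp add: card_Diff_subset)
  then have "B - T \<noteq> {}" using Suc.prems(2) by (metis card.empty diff_is_0_eq not_less_eq_eq)
  then obtain y where "y \<in> B - T"
    and y: "(d - k) * card S' \<le> real (card {x\<in>S'. R x y}) * card (B - T)"
    using exists_popular_element[OF \<open>finite S'\<close> _ _ rest] assms(2) by blast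
  define S'' where "S'' = {x\<in>S'. R x y}"
  have "d - k \<ge> 1" using Suc.prems(1) by simp
  have "card S * (d - Suc k) ^ Suc k \<le> card S * (d - k) ^ Suc k"
    using Suc.prems(1) by (intro mult_left_mono power_mono) auto
  also have "\<dots> = (card S * (d - k) ^ k) * (d - k)" by simp
  also have "\<dots> \<le> (real (card S') * real (card B) ^ k) * (d - k)"
    using bound \<open>d - k \<ge> 1\<close> by (intro mult_right_mono) auto
  also have "\<dots> = ((d - k) * card S') * real (card B) ^ k" by simp
  also have "\<dots> \<le> (real (card S'') * card (B - T)) * real (card B) ^ k"
    using y unfolding S''_def by (intro mult_right_mono) auto
  also have "\<dots> \<le> (real (card S'') * card B) * real (card B) ^ k"
    using card_rest by (intro mult_right_mono mult_left_mono) auto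
  finally have "card S * (d - Suc k) ^ Suc k \<le> real (card S'') * real (card B) ^ Suc k"
    by (simp add: mult_ac)
  then show ?case
    using T \<open>y \<in> B - T\<close> \<open>finite T\<close>
    by (intro exI[of _ "insert y T"] exI[of _ S'']) (auto simp: S''_def)
qed

lemma dense_relation_contains_product:
  fixes eps :: real
  assumes "finite S" "finite B" "\<forall>x\<in>S. eps * card B \<le> card {y\<in>B. R x y}"
    and "0 < eps" "eps \<le> 1"
    and large_B: "t * (2 / eps) ^ t \<le> card B" and large_S: "t * (2 / eps) ^ t < card S"
  shows "\<exists>T U. T \<subseteq> B \<and> card T = t \<and> U \<subseteq> S \<and> card U = t \<and> (\<forall>x\<in>U. \<forall>y\<in>T. R x y)"
proof -
  have "2 * t \<le> eps * card B"
  proof (cases "t = 0")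
    case False
    then have "2 / eps \<le> (2 / eps) ^ t"
      using \<open>0 < eps\<close> \<open>eps \<le> 1\<close> by (intro self_le_power) auto
    then have "eps * (t * (2 / eps)) \<le> eps * card B"
      using large_B \<open>0 < eps\<close> by (smt (verit) mult_left_mono of_nat_0_le_iff)
    then show ?thesis
      using \<open>0 < eps\<close> by simp
  qed (use \<open>0 < eps\<close> in simp)
  moreover have "eps * card B \<le> card B"
    using \<open>0 < eps\<close> \<open>eps \<le> 1\<close> by (intro mult_left_le_one_le) auto
  ultimately have "real t \<le> eps * card B" "t \<le> card B"
    by linarith+
  from greedy_product_in_relation[OF assms(1-3) this]
  obtain T S' where "T \<subseteq> B" "card T = t" "S' \<subseteq> S" "\<forall>x\<in>S'. \<forall>y\<in>T. R x y"
    and survivors: "card S * (eps * card B - t) ^ t \<le> real (card S') * real (card B) ^ t"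
    by blast
  have "real (card B) ^ t > 0"
    using \<open>t \<le> card B\<close> by (cases "t = 0") auto
  have "card S * (eps / 2) ^ t * real (card B) ^ t = card S * (eps * card B / 2) ^ t"
    by (simp add: power_mult_distrib[symmetric] mult.assoc mult.commute)
  also have "\<dots> \<le> card S * (eps * card B - t) ^ t"
    using \<open>2 * t \<le> eps * card B\<close> \<open>0 < eps\<close> by (intro mult_left_mono power_mono) auto
  also have "\<dots> \<le> card S' * real (card B) ^ t"
    by (rule survivors)
  finally have "card S * (eps / 2) ^ t \<le> card S'"
    using \<open>real (card B) ^ t > 0\<close> by (simp add: mult_le_cancel_right_pos)
  moreover have "t = t * (2 / eps) ^ t * (eps / 2) ^ t"
    using \<open>0 < eps\<close> by (simp add: power_mult_distrib[symmetric])
  moreover have "\<dots> < card S * (eps / 2) ^ t"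
    using large_S \<open>0 < eps\<close> by (intro mult_strict_right_mono) auto
  ultimately have "t \<le> card S'"
    by linarith
  then obtain U where "U \<subseteq> S'" "card U = t"
    by (meson obtain_subset_with_card_n)
  with \<open>T \<subseteq> B\<close> \<open>card T = t\<close> \<open>S' \<subseteq> S\<close> \<open>\<forall>x\<in>S'. \<forall>y\<in>T. R x y\<close> show ?thesis
    by (intro exI[of _ T] exI[of _ U]) auto
qed

lemma bipartite_no_triangle:
  assumes "simple_graph V E" "bipartite V E" "E u v" "E v w"
  shows "\<not> E u w"
proof
  assume "E u w"
  obtain X Y where "X \<union> Y = V" "X \<inter> Y = {}"
    "\<forall>u\<in>X. \<forall>v\<in>X. \<not> E u v" "\<forall>u\<in>Y. \<forall>v\<in>Y. \<not> E u v"
    using assms(2) unfolding bipartite_def by blast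
  moreover have "u \<in> V" "v \<in> V" "w \<in> V"
    using assms(1,3,4) unfolding simple_graph_def by blast+
  ultimately show False using assms(3,4) \<open>E u w\<close> by blast
qed

lemma has_induced_biclaw_if_anticomplete:
  assumes G: "simple_graph V E" "bipartite V E" and "E a b"
    and T: "T \<subseteq> nbhd V E b" "T \<noteq> {}" and U: "U \<subseteq> nbhd V E a" "U \<noteq> {}"
    and anticomplete: "\<forall>x\<in>T. \<forall>y\<in>U. \<not> E x y"
  shows "has_induced_biclaw V E (card T) (card U)"
proof -
  have no_tri: "\<And>u v w. E u v \<Longrightarrow> E v w \<Longrightarrow> \<not> E u w"
    using bipartite_no_triangle[OF G] by blast
  have sym: "\<And>u v. E u v \<Longrightarrow> E v u" and irrefl: "\<And>v. \<not> E v v"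
    and "finite V" and "a \<in> V" "b \<in> V"
    using G(1) \<open>E a b\<close> unfolding simple_graph_def by blast+
  have "T \<subseteq> V" "U \<subseteq> V" and Eb: "\<forall>x\<in>T. E b x" and Ea: "\<forall>y\<in>U. E a y"
    using T U unfolding nbhd_def by auto
  then have "finite T" "finite U"
    using \<open>finite V\<close> finite_subset by blast+
  obtain xs where xs: "bij_betw xs {..<card T} T"
    using ex_bij_betw_nat_finite[OF \<open>finite T\<close>] by (auto simp: atLeast0LessThan)
  obtain ys where ys: "bij_betw ys {..<card U} U"
    using ex_bij_betw_nat_finite[OF \<open>finite U\<close>] by (auto simp: atLeast0LessThan)
  have "a \<notin> T" "b \<notin> U"
    using anticomplete Ea Eb T(2) U(2) sym by blast+
  have xs_img: "xs ` {..<card T} = T" and ys_img: "ys ` {..<card U} = U"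
    using xs ys by (auto simp: bij_betw_def)
  have xs_T: "\<And>i. i < card T \<Longrightarrow> xs i \<in> T" and ys_U: "\<And>j. j < card U \<Longrightarrow> ys j \<in> U"
    using xs_img ys_img by auto
  have "T \<inter> U = {}"
    using Ea Eb no_tri[OF \<open>E a b\<close>] by blast
  show ?thesis
    unfolding has_induced_biclaw_def
  proof (rule exI[of _ a], rule exI[of _ b], rule exI[of _ xs], rule exI[of _ ys],
      intro conjI allI impI, unfold xs_img ys_img)
    show "inj_on xs {..<card T}" "inj_on ys {..<card U}"
      using xs ys by (auto simp: bij_betw_def)
  qed (use xs_T ys_U \<open>E a b\<close> \<open>a \<in> V\<close> \<open>b \<in> V\<close> \<open>T \<subseteq> V\<close> \<open>U \<subseteq> V\<close>
      \<open>a \<notin> T\<close> \<open>b \<notin> U\<close> \<open>T \<inter> U = {}\<close> Ea Eb anticomplete irrefl sym no_tri in meson)+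
qed

lemma sparse_set_non_neighbours:
  assumes "x \<in> sparse_set V E A B eps" "B \<subseteq> V" "finite B"
  shows "eps * card B \<le> card {y\<in>B. \<not> E x y}"
proof -
  have "card B = card ({y\<in>B. E x y} \<union> {y\<in>B. \<not> E x y})"
    by (rule arg_cong[where f = card]) auto
  also have "\<dots> = card {y\<in>B. E x y} + card {y\<in>B. \<not> E x y}"
    using \<open>finite B\<close> by (intro card_Un_disjoint) auto
  finally have "card B = card {y\<in>B. E x y} + card {y\<in>B. \<not> E x y}" .
  moreover have "nbhd V E x \<inter> B = {y\<in>B. E x y}"
    using \<open>B \<subseteq> V\<close> unfolding nbhd_def by auto
  ultimately show ?thesis
    using assms(1) unfolding sparse_set_def by (auto simp: algebra_simps)
qed

lemma card_sparse_set_le: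
  fixes eps :: real
  assumes G: "simple_graph V E" "bipartite V E" and free: "induced_biclaw_free V E t t"
    and "0 < t" "0 < eps" "eps \<le> 1"
    and "E a b" "A \<subseteq> nbhd V E a" "B \<subseteq> nbhd V E b"
    and large: "t * (2 / eps) ^ t \<le> card B"
  shows "card (sparse_set V E A B eps) \<le> t * (2 / eps) ^ t"
proof (rule ccontr)
  define S where "S = sparse_set V E A B eps"
  assume "\<not> ?thesis"
  then have many: "t * (2 / eps) ^ t < card S" unfolding S_def by simp
  have "finite V" using G(1) unfolding simple_graph_def by blast
  have "B \<subseteq> V" "S \<subseteq> A" "A \<subseteq> V"
    using assms(8,9) unfolding S_def sparse_set_def nbhd_def by auto
  have "finite B" "finite S"
    using finite_subset[OF \<open>B \<subseteq> V\<close> \<open>finite V\<close>]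
      finite_subset[OF \<open>S \<subseteq> A\<close> finite_subset[OF \<open>A \<subseteq> V\<close> \<open>finite V\<close>]] .
  have "\<forall>x\<in>S. eps * card B \<le> card {y\<in>B. \<not> E x y}"
    using sparse_set_non_neighbours[OF _ \<open>B \<subseteq> V\<close> \<open>finite B\<close>] unfolding S_def by blast
  from dense_relation_contains_product[OF \<open>finite S\<close> \<open>finite B\<close> this
      \<open>0 < eps\<close> \<open>eps \<le> 1\<close> large many]
  obtain T U where T: "T \<subseteq> B" "card T = t" and U: "U \<subseteq> S" "card U = t"
    and anticomplete: "\<forall>x\<in>U. \<forall>y\<in>T. \<not> E x y"
    by blast
  have "has_induced_biclaw V E (card T) (card U)"
  proof (rule has_induced_biclaw_if_anticomplete[OF G \<open>E a b\<close>])
    show "T \<subseteq> nbhd V E b" "U \<subseteq> nbhd V E a"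
      using T U \<open>S \<subseteq> A\<close> assms(8,9) by auto
    show "T \<noteq> {}" "U \<noteq> {}"
      using T(2) U(2) \<open>0 < t\<close> by auto
    show "\<forall>x\<in>T. \<forall>y\<in>U. \<not> E x y"
      using anticomplete G(1) unfolding simple_graph_def by blast
  qed
  then show False
    using free T(2) U(2) unfolding induced_biclaw_free_def by simp
qed

theorem mainTheorem4:
  shows "\<exists>C2 :: nat \<Rightarrow> real \<Rightarrow> nat. \<forall>t::nat. \<forall>eps::real. 0 < t \<and> 0 < eps \<and> eps < 1 \<longrightarrow>
    (\<forall>(V::nat set) (E::nat \<Rightarrow> nat \<Rightarrow> bool).
       simple_graph V E \<and> bipartite V E \<and> induced_biclaw_free V E t t \<longrightarrow>
       (\<forall>a b A B. E a b \<and> A \<subseteq> nbhd V E a \<and> B \<subseteq> nbhd V E b \<and> card B \<ge> C2 t eps \<longrightarrow>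
          card (sparse_set V E A B eps) \<le> C2 t eps))"
proof (intro exI[of _ "\<lambda>t eps. nat \<lceil>t * (2 / eps) ^ t\<rceil>"] allI impI, elim conjE)
  fix t :: nat and eps :: real and V :: "nat set" and E a b A B
  assume "0 < t" "0 < eps" "eps < 1"
    and G: "simple_graph V E" "bipartite V E" "induced_biclaw_free V E t t"
    and "E a b" "A \<subseteq> nbhd V E a" "B \<subseteq> nbhd V E b"
    and "nat \<lceil>t * (2 / eps) ^ t\<rceil> \<le> card B"
  then have "t * (2 / eps) ^ t \<le> card B"
    by (simp add: nat_ceiling_le_eq)
  with card_sparse_set_le[OF G \<open>0 < t\<close> \<open>0 < eps\<close>] \<open>eps < 1\<close> \<open>E a b\<close>
    \<open>A \<subseteq> nbhd V E a\<close> \<open>B \<subseteq> nbhd V E b\<close>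
  have "card (sparse_set V E A B eps) \<le> t * (2 / eps) ^ t"
    by simp
  then show "card (sparse_set V E A B eps) \<le> nat \<lceil>t * (2 / eps) ^ t\<rceil>"
    by (simp add: le_nat_iff le_ceiling_iff)
qed

end
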